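(* Let $\Gamma$ be a finite set of assumptions of the form $\{b_1q_1\overline{b_1'}=0,\dots,b_mq_m\overline{b_m'}=0\}\cup\{c_1\le c_1',\dots,c_n\le c_n'\}$ with $q_i\in\Sigma$ and all $b_i,b_i',c_j,c_j'$ Boolean expressions. Then for every KAT expression $e$, every atom $\alpha\in\mathsf{At}$ and every $p\in\Sigma$, $$\mathsf{D}_{\alpha p}(\mathsf{GS}^\Gamma(e))=\mathsf{GS}^\Gamma(\Delta^\Gamma_{\alpha p}(e)).$$
   Context: Let $\Sigma$ be a finite nonempty set of action symbols and $T=\{t_1,\dots,t_l\}$ a finite nonempty set of test symbols. Boolean expressions: $b::=0\mid 1\mid t\mid \overline{b}\mid b_1+b_2\mid b_1 b_2$; KAT expressions (syntactic terms): $e::=p\in\Sigma\mid b\mid e_1+e_2\mid e_1e_2\mid e^*$. $\mathsf{At}$ is the set of atoms (words $b_1\cdots b_l$ with $b_i\in\{t_i,\overline{t_i}\}$), identified with truth assignments to $T$; $\alpha\le b$ means $b$ is true under $\alpha$. Guarded strings: $\mathsf{GS}=(\mathsf{At}\cdot\Sigma)^*\cdot\mathsf{At}$; for $R\subseteq\mathsf{GS}$, $\mathsf{D}_{\alpha p}(R)=\{y\in\mathsf{GS}\mid\alpha py\in R\}$. The fusion product $xy$ is defined only when the last atom of $x$ equals the first atom of $y$, and is the concatenation with one copy of that atom omitted; $X\diamond Y=\{xy\mid x\in X,y\in Y,xy\text{ defined}\}$, $X^{n+1}=X\diamond X^n$. $\mathsf{At}^\Gamma=\{\alpha\in\mathsf{At}\mid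 \alpha\le c\Rightarrow\alpha\le c'\text{ for all }(c\le c')\in\Gamma\}$. Guarded strings modulo $\Gamma$: $\mathsf{GS}^\Gamma(p)=\{\alpha p\beta\mid\alpha,\beta\in\mathsf{At}^\Gamma\text{ and for every assumption }bp\overline{b'}=0\text{ in }\Gamma\text{ (with this same }p),\ \alpha\le b\Rightarrow\beta\le b'\}$; $\mathsf{GS}^\Gamma(b)=\{\alpha\in\mathsf{At}^\Gamma\mid\alpha\le b\}$; $\mathsf{GS}^\Gamma(e_1+e_2)=\mathsf{GS}^\Gamma(e_1)\cup\mathsf{GS}^\Gamma(e_2)$; $\mathsf{GS}^\Gamma(e_1e_2)=\mathsf{GS}^\Gamma(e_1)\diamond\mathsf{GS}^\Gamma(e_2)$; $\mathsf{GS}^\Gamma(e^* )=\bigcup_{n\ge0}\mathsf{GS}^\Gamma(e)^n$ with $X^0=\mathsf{At}^\Gamma$; for a set $E$, $\mathsf{GS}^\Gamma(E)=\bigcup_{e\in E}\mathsf{GS}^\Gamma(e)$. $\mathsf{E}_\alpha(p)=0$; $\mathsf{E}_\alpha(b)=1$ iff $\alpha\le b$; $\mathsf{E}_\alpha(e_1+e_2)=\max(\mathsf{E}_\alpha(e_1),\mathsf{E}_\alpha(e_2))$; $\mathsf{E}_\alpha(e_1e_2)=\mathsf{E}_\alpha(e_1)\mathsf{E}_\alpha(e_2)$; $\mathsf{E}_\alpha(e^* )=1$. For a set $S$ of expressions: $S\cdot e=\{e'e\mid e'\in S\}$ if $e$ is neither the constant $0$ nor $1$, $S\cdot0=\emptyset$,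 $S\cdot1=S$. Partial derivatives modulo $\Gamma$: if $\alpha\notin\mathsf{At}^\Gamma$ then $\Delta^\Gamma_{\alpha p}(e)=\emptyset$ for all $e$. If $\alpha\in\mathsf{At}^\Gamma$: $\Delta^\Gamma_{\alpha p}(p')=\{\prod\{b'\mid (bp\overline{b'}=0)\in\Gamma,\ \alpha\le b\}\}$ (a singleton containing the conjunction of those $b'$, which is the constant $1$ if there are none) if $p'=p$, and $\emptyset$ if $p'\ne p$; $\Delta^\Gamma_{\alpha p}(b)=\emptyset$; $\Delta^\Gamma_{\alpha p}(e_1+e_2)=\Delta^\Gamma_{\alpha p}(e_1)\cup\Delta^\Gamma_{\alpha p}(e_2)$; $\Delta^\Gamma_{\alpha p}(e_1e_2)=\Delta^\Gamma_{\alpha p}(e_1)\cdot e_2$ if $\mathsf{E}_\alpha(e_1)=0$, and $\Delta^\Gamma_{\alpha p}(e_1)\cdot e_2\cup\Delta^\Gamma_{\alpha p}(e_2)$ if $\mathsf{E}_\alpha(e_1)=1$; $\Delta^\Gamma_{\alpha p}(e^* )=\Delta^\Gamma_{\alpha p}(e)\cdot e^*$. *)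

theory Defs
  imports Main
begin

text \<open>Test symbols: a finite type 't (T = UNIV, finite and nonempty).
  Action symbols: a finite type 'p (Sigma = UNIV, finite and nonempty).
  Atoms are identified with truth assignments 't \<Rightarrow> bool.\<close>

datatype 't bexp = BZero | BOne | BTest 't | BNot "'t bexp"
  | BPlus "'t bexp" "'t bexp" | BTimes "'t bexp" "'t bexp"

datatype ('p, 't) kat = Act 'p | Test "'t bexp" | Plus "('p,'t) kat" "('p,'t) kat"
  | Seq "('p,'t) kat" "('p,'t) kat" | Star "('p,'t) kat"

type_synonym 't atom = "'t \<Rightarrow> bool"

text \<open>alpha \<le> b : b is true under alpha\<close>
fun bsat :: "'t atom \<Rightarrow> 't bexp \<Rightarrow> bool" where
  "bsat \<alpha> BZero = False"
| "bsat \<alpha> BOne = True"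
| "bsat \<alpha> (BTest t) = \<alpha> t"
| "bsat \<alpha> (BNot b) = (\<not> bsat \<alpha> b)"
| "bsat \<alpha> (BPlus b1 b2) = (bsat \<alpha> b1 \<or> bsat \<alpha> b2)"
| "bsat \<alpha> (BTimes b1 b2) = (bsat \<alpha> b1 \<and> bsat \<alpha> b2)"

text \<open>Assumptions: Hoare b q b' stands for  b q (not b') = 0 ; Leq c c' stands for c \<le> c'.\<close>
datatype ('p, 't) assm = Hoare "'t bexp" 'p "'t bexp" | Leq "'t bexp" "'t bexp"

text \<open>Guarded strings alpha_0 p_1 alpha_1 ... p_n alpha_n, represented as
  (alpha_0, [(p_1,alpha_1),...,(p_n,alpha_n)]).\<close>
type_synonym ('p, 't) gstring = "'t atom \<times> ('p \<times> 't atom) list"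

definition first_atom :: "('p,'t) gstring \<Rightarrow> 't atom" where
  "first_atom x = fst x"

definition last_atom :: "('p,'t) gstring \<Rightarrow> 't atom" where
  "last_atom x = (if snd x = [] then fst x else snd (last (snd x)))"

text \<open>Fusion product (only defined when last atom of x = first atom of y).\<close>
definition fuse :: "('p,'t) gstring \<Rightarrow> ('p,'t) gstring \<Rightarrow> ('p,'t) gstring" where
  "fuse x y = (fst x, snd x @ snd y)"

definition fprod :: "('p,'t) gstring set \<Rightarrow> ('p,'t) gstring set \<Rightarrow> ('p,'t) gstring set" where
  "fprod X Y = {fuse x y | x y. x \<in> X \<and> y \<in> Y \<and> last_atom x = first_atom y}"

definition D :: "'t atom \<Rightarrow> 'p \<Rightarrow> ('p,'t) gstring set \<Rightarrow> ('p,'t) gstring set" where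
  "D \<alpha> p R = {y. (\<alpha>, (p, fst y) # snd y) \<in> R}"

definition AtG :: "('p,'t) assm set \<Rightarrow> 't atom set" where
  "AtG \<Gamma> = {\<alpha>. \<forall>c c'. Leq c c' \<in> \<Gamma> \<longrightarrow> bsat \<alpha> c \<longrightarrow> bsat \<alpha> c'}"

fun fpow :: "('p,'t) assm set \<Rightarrow> ('p,'t) gstring set \<Rightarrow> nat \<Rightarrow> ('p,'t) gstring set" where
  "fpow \<Gamma> X 0 = {(\<alpha>, []) | \<alpha>. \<alpha> \<in> AtG \<Gamma>}"
| "fpow \<Gamma> X (Suc n) = fprod X (fpow \<Gamma> X n)"

fun GS :: "('p,'t) assm set \<Rightarrow> ('p,'t) kat \<Rightarrow> ('p,'t) gstring set" where
  "GS \<Gamma> (Act p) = {(\<alpha>, [(p, \<beta>)]) | \<alpha> \<beta>. \<alpha> \<in> AtG \<Gamma> \<and> \<beta> \<in> AtG \<Gamma> \<and>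
      (\<forall>b b'. Hoare b p b' \<in> \<Gamma> \<longrightarrow> bsat \<alpha> b \<longrightarrow> bsat \<beta> b')}"
| "GS \<Gamma> (Test b) = {(\<alpha>, []) | \<alpha>. \<alpha> \<in> AtG \<Gamma> \<and> bsat \<alpha> b}"
| "GS \<Gamma> (Plus e1 e2) = GS \<Gamma> e1 \<union> GS \<Gamma> e2"
| "GS \<Gamma> (Seq e1 e2) = fprod (GS \<Gamma> e1) (GS \<Gamma> e2)"
| "GS \<Gamma> (Star e) = (\<Union>n. fpow \<Gamma> (GS \<Gamma> e) n)"

definition GSset :: "('p,'t) assm set \<Rightarrow> ('p,'t) kat set \<Rightarrow> ('p,'t) gstring set" where
  "GSset \<Gamma> E = (\<Union>e\<in>E. GS \<Gamma> e)"

fun Eps :: "'t atom \<Rightarrow> ('p,'t) kat \<Rightarrow> bool" where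
  "Eps \<alpha> (Act p) = False"
| "Eps \<alpha> (Test b) = bsat \<alpha> b"
| "Eps \<alpha> (Plus e1 e2) = (Eps \<alpha> e1 \<or> Eps \<alpha> e2)"
| "Eps \<alpha> (Seq e1 e2) = (Eps \<alpha> e1 \<and> Eps \<alpha> e2)"
| "Eps \<alpha> (Star e) = True"

definition cdot :: "('p,'t) kat set \<Rightarrow> ('p,'t) kat \<Rightarrow> ('p,'t) kat set" where
  "cdot S e = (if e = Test BZero then {} else if e = Test BOne then S
               else (\<lambda>e'. Seq e' e) ` S)"

fun bprod :: "'t bexp list \<Rightarrow> 't bexp" where
  "bprod [] = BOne"
| "bprod [b] = b"
| "bprod (b # bs) = BTimes b (bprod bs)"

text \<open>The conjunction of the finitely many b' with (b p (not b') = 0) in Gamma and alpha \<le> b,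
  in some fixed enumeration order.\<close>
definition post :: "('p,'t) assm set \<Rightarrow> 't atom \<Rightarrow> 'p \<Rightarrow> 't bexp" where
  "post \<Gamma> \<alpha> p = bprod (SOME xs. set xs = {b'. \<exists>b. Hoare b p b' \<in> \<Gamma> \<and> bsat \<alpha> b})"

fun Delta :: "('p,'t) assm set \<Rightarrow> 't atom \<Rightarrow> 'p \<Rightarrow> ('p,'t) kat \<Rightarrow> ('p,'t) kat set" where
  "Delta \<Gamma> \<alpha> p (Act p') = (if \<alpha> \<in> AtG \<Gamma> \<and> p' = p then {Test (post \<Gamma> \<alpha> p)} else {})"
| "Delta \<Gamma> \<alpha> p (Test b) = {}"
| "Delta \<Gamma> \<alpha> p (Plus e1 e2) = Delta \<Gamma> \<alpha> p e1 \<union> Delta \<Gamma> \<alpha> p e2"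
| "Delta \<Gamma> \<alpha> p (Seq e1 e2) = (if Eps \<alpha> e1
      then cdot (Delta \<Gamma> \<alpha> p e1) e2 \<union> Delta \<Gamma> \<alpha> p e2
      else cdot (Delta \<Gamma> \<alpha> p e1) e2)"
| "Delta \<Gamma> \<alpha> p (Star e) = cdot (Delta \<Gamma> \<alpha> p e) (Star e)"

end

theory Submission
  imports Defs
begin

(* The proof is by structural induction on e, after reducing it to a handful of
   semantic facts about guarded-string languages:
   - every string of GS Gamma e starts and ends with an atom of At^Gamma ("guarded"),
     so for alpha outside At^Gamma both sides are empty;
   - Eps alpha e decides whether the trivial string alpha lies in GS Gamma e;
   - D distributes over fusion products like a Brzozowski derivative:
       D (X <> Y) = D X <> Y  \<union>  (if alpha \<in> X then D Y else {}),
     and over the star:  D (X* ) = D X <> X*;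
   - the smart constructor cdot is semantically fusion with GS Gamma e, using that
     guarded languages are right units for the language of the test 1;
   - the Boolean expression post Gamma alpha p holds at beta exactly when every
     Hoare assumption for p fired by alpha is satisfied by beta (needs finite Gamma). *)

lemma bsat_bprod: "bsat \<beta> (bprod bs) = (\<forall>b\<in>set bs. bsat \<beta> b)"
  by (induction bs rule: bprod.induct) auto

lemma bsat_post:
  assumes "finite \<Gamma>"
  shows "bsat \<beta> (post \<Gamma> \<alpha> p) \<longleftrightarrow> (\<forall>b b'. Hoare b p b' \<in> \<Gamma> \<longrightarrow> bsat \<alpha> b \<longrightarrow> bsat \<beta> b')"
proof -
  let ?S = "{b'. \<exists>b. Hoare b p b' \<in> \<Gamma> \<and> bsat \<alpha> b}"
  have "?S \<subseteq> (\<lambda>a. case a of Hoare b q b' \<Rightarrow> b' | Leq c c' \<Rightarrow> c') ` \<Gamma>"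
    by force
  with assms have "finite ?S" by (rule finite_surj)
  then have "\<exists>bs. set bs = ?S" by (rule finite_list)
  then have "set (SOME bs. set bs = ?S) = ?S" by (rule someI_ex)
  then show ?thesis unfolding post_def bsat_bprod by auto
qed

definition guarded :: "('p,'t) assm set \<Rightarrow> ('p,'t) gstring set \<Rightarrow> bool" where
  "guarded \<Gamma> X \<longleftrightarrow> (\<forall>x\<in>X. first_atom x \<in> AtG \<Gamma> \<and> last_atom x \<in> AtG \<Gamma>)"

lemma last_atom_fuse: "last_atom x = first_atom y \<Longrightarrow> last_atom (fuse x y) = last_atom y"
  by (auto simp: last_atom_def first_atom_def fuse_def)

lemma last_atom_Cons: "last_atom (\<alpha>, (p, \<beta>) # w) = last_atom (\<beta>, w)"
  by (simp add: last_atom_def)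

lemma guarded_fprod:
  assumes "guarded \<Gamma> X" and "guarded \<Gamma> Y"
  shows "guarded \<Gamma> (fprod X Y)"
  unfolding guarded_def
proof
  fix w assume "w \<in> fprod X Y"
  then obtain x y where xy: "x \<in> X" "y \<in> Y" "last_atom x = first_atom y" "w = fuse x y"
    by (auto simp: fprod_def)
  then have "first_atom w = first_atom x" "last_atom w = last_atom y"
    by (simp_all add: last_atom_fuse) (simp add: fuse_def first_atom_def)
  with xy assms show "first_atom w \<in> AtG \<Gamma> \<and> last_atom w \<in> AtG \<Gamma>"
    by (simp add: guarded_def)
qed

lemma guarded_fpow: "guarded \<Gamma> X \<Longrightarrow> guarded \<Gamma> (fpow \<Gamma> X n)"
proof (induction n)
  case 0
  show ?case by (auto simp: guarded_def first_atom_def last_atom_def)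
next
  case (Suc n)
  then show ?case by (simp add: guarded_fprod)
qed

lemma guarded_UN: "(\<And>i. guarded \<Gamma> (X i)) \<Longrightarrow> guarded \<Gamma> (\<Union>i\<in>I. X i)"
  by (auto simp: guarded_def)

lemma guarded_GS: "guarded \<Gamma> (GS \<Gamma> e)"
proof (induction e)
  case (Seq e1 e2)
  then show ?case by (simp add: guarded_fprod)
next
  case (Star e)
  then show ?case by (simp add: guarded_UN guarded_fpow)
qed (auto simp: guarded_def first_atom_def last_atom_def)

text \<open>Strings of a guarded language start inside \<open>At\<^sup>\<Gamma>\<close>, so derivatives by other atoms vanish.\<close>
lemma D_GS_outside: "\<alpha> \<notin> AtG \<Gamma> \<Longrightarrow> D \<alpha> p (GS \<Gamma> e) = {}"
  using guarded_GS[of \<Gamma> e] by (auto simp: D_def guarded_def first_atom_def)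

lemma Delta_outside: "\<alpha> \<notin> AtG \<Gamma> \<Longrightarrow> Delta \<Gamma> \<alpha> p e = {}"
  by (induction e) (auto simp: cdot_def)

lemma atom_in_fprod: "((\<alpha>, []) \<in> fprod X Y) \<longleftrightarrow> (\<alpha>, []) \<in> X \<and> (\<alpha>, []) \<in> Y"
  unfolding fprod_def
  by (auto simp: fuse_def last_atom_def first_atom_def intro!: exI[of _ "(\<alpha>, [])"])

lemma Eps_iff_atom_in_GS: "\<alpha> \<in> AtG \<Gamma> \<Longrightarrow> Eps \<alpha> e \<longleftrightarrow> (\<alpha>, []) \<in> GS \<Gamma> e"
proof (induction e)
  case (Star e)
  then have "(\<alpha>, []) \<in> fpow \<Gamma> (GS \<Gamma> e) 0" by simp
  then show ?case by (auto simp del: fpow.simps)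
qed (auto simp: atom_in_fprod)

lemma fprod_mono: "A \<subseteq> A' \<Longrightarrow> B \<subseteq> B' \<Longrightarrow> fprod A B \<subseteq> fprod A' B'"
  unfolding fprod_def by blast

lemma fprod_UN_left: "fprod (\<Union>i\<in>I. A i) Y = (\<Union>i\<in>I. fprod (A i) Y)"
  unfolding fprod_def by blast

lemma D_UN: "D \<alpha> p (\<Union>i. A i) = (\<Union>i. D \<alpha> p (A i))"
  unfolding D_def by blast

text \<open>Splitting a fused string that begins with \<open>\<alpha> p\<close>: either the left factor is the
  trivial string \<open>\<alpha>\<close>, or the leading step \<open>\<alpha> p\<close> belongs to the left factor.\<close>
lemma D_fprod_subset:
  "D \<alpha> p (fprod X Y) \<subseteq> fprod (D \<alpha> p X) Y \<union> (if (\<alpha>, []) \<in> X then D \<alpha> p Y else {})"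
proof
  fix y assume "y \<in> D \<alpha> p (fprod X Y)"
  then obtain x z where xz: "x \<in> X" "z \<in> Y" "last_atom x = first_atom z"
    and split: "(\<alpha>, (p, fst y) # snd y) = fuse x z"
    by (auto simp: D_def fprod_def)
  show "y \<in> fprod (D \<alpha> p X) Y \<union> (if (\<alpha>, []) \<in> X then D \<alpha> p Y else {})"
  proof (cases "snd x")
    case Nil
    with xz split have "x = (\<alpha>, [])" "z = (\<alpha>, (p, fst y) # snd y)"
      by (cases x; cases z; auto simp: fuse_def last_atom_def first_atom_def)+
    with xz show ?thesis by (auto simp: D_def)
  next
    case (Cons a w)
    with split have x: "x = (\<alpha>, (p, fst y) # w)" and rest: "snd y = w @ snd z"
      by (cases x; auto simp: fuse_def)+
    have "(fst y, w) \<in> D \<alpha> p X" using xz(1) x by (simp add: D_def)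
    moreover have "last_atom (fst y, w) = first_atom z"
      using xz(3) x by (simp add: last_atom_Cons)
    moreover have "y = fuse (fst y, w) z" using rest by (cases y) (simp add: fuse_def)
    ultimately show ?thesis using xz(2) unfolding fprod_def by blast
  qed
qed

lemma fprod_D_subset:
  "fprod (D \<alpha> p X) Y \<union> (if (\<alpha>, []) \<in> X then D \<alpha> p Y else {}) \<subseteq> D \<alpha> p (fprod X Y)"
proof -
  have "fprod (D \<alpha> p X) Y \<subseteq> D \<alpha> p (fprod X Y)"
  proof
    fix y assume "y \<in> fprod (D \<alpha> p X) Y"
    then obtain x z where xz: "(\<alpha>, (p, fst x) # snd x) \<in> X" "z \<in> Y" "last_atom x = first_atom z"
      "y = fuse x z" by (auto simp: D_def fprod_def)
    then have "last_atom (\<alpha>, (p, fst x) # snd x) = first_atom z"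
      by (simp add: last_atom_Cons)
    moreover have "(\<alpha>, (p, fst y) # snd y) = fuse (\<alpha>, (p, fst x) # snd x) z"
      using xz(4) by (simp add: fuse_def)
    ultimately show "y \<in> D \<alpha> p (fprod X Y)"
      using xz(1,2) unfolding D_def fprod_def by blast
  qed
  moreover have "D \<alpha> p Y \<subseteq> D \<alpha> p (fprod X Y)" if "(\<alpha>, []) \<in> X"
    using that unfolding D_def fprod_def
    by (auto simp: fuse_def last_atom_def first_atom_def intro!: exI[of _ "(\<alpha>, [])"])
  ultimately show ?thesis by auto
qed

lemma D_fprod:
  "D \<alpha> p (fprod X Y) = fprod (D \<alpha> p X) Y \<union> (if (\<alpha>, []) \<in> X then D \<alpha> p Y else {})"
  using D_fprod_subset fprod_D_subset by (rule equalityI)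

text \<open>The star rule: \<open>D (X\<^sup>*) = D X \<diamond> X\<^sup>*\<close>; the unit \<open>X\<^sup>0\<close> has no non-trivial strings.\<close>
lemma D_star: "D \<alpha> p (\<Union>n. fpow \<Gamma> X n) = fprod (D \<alpha> p X) (\<Union>n. fpow \<Gamma> X n)"
proof
  have "D \<alpha> p (fpow \<Gamma> X n) \<subseteq> fprod (D \<alpha> p X) (\<Union>n. fpow \<Gamma> X n)" for n
  proof (induction n)
    case 0 show ?case by (auto simp: D_def)
  next
    case (Suc n)
    have "fprod (D \<alpha> p X) (fpow \<Gamma> X n) \<subseteq> fprod (D \<alpha> p X) (\<Union>n. fpow \<Gamma> X n)"
      by (rule fprod_mono) auto
    with Suc show ?case by (simp add: D_fprod)
  qed
  then show "D \<alpha> p (\<Union>n. fpow \<Gamma> X n) \<subseteq> fprod (D \<alpha> p X) (\<Union>n. fpow \<Gamma> X n)"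
    unfolding D_UN by blast
next
  have "fprod (D \<alpha> p X) (fpow \<Gamma> X n) \<subseteq> D \<alpha> p (fpow \<Gamma> X (Suc n))" for n
    by (simp add: D_fprod)
  then have "fprod (D \<alpha> p X) (fpow \<Gamma> X n) \<subseteq> D \<alpha> p (\<Union>n. fpow \<Gamma> X n)" for n
    unfolding D_UN by blast
  then show "fprod (D \<alpha> p X) (\<Union>n. fpow \<Gamma> X n) \<subseteq> D \<alpha> p (\<Union>n. fpow \<Gamma> X n)"
    unfolding fprod_def by blast
qed

lemma GSset_Un: "GSset \<Gamma> (A \<union> B) = GSset \<Gamma> A \<union> GSset \<Gamma> B"
  by (auto simp: GSset_def)

lemma fprod_GS_one: "guarded \<Gamma> X \<Longrightarrow> fprod X (GS \<Gamma> (Test BOne)) = X"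
proof (intro equalityI subsetI)
  fix x assume "x \<in> fprod X (GS \<Gamma> (Test BOne))"
  then show "x \<in> X" by (auto simp: fprod_def fuse_def)
next
  fix x assume "guarded \<Gamma> X" "x \<in> X"
  then have "(last_atom x, []) \<in> GS \<Gamma> (Test BOne)" by (simp add: guarded_def)
  moreover have "x = fuse x (last_atom x, [])" by (simp add: fuse_def)
  moreover have "last_atom x = first_atom (last_atom x, [])" by (simp add: first_atom_def)
  ultimately show "x \<in> fprod X (GS \<Gamma> (Test BOne))"
    using \<open>x \<in> X\<close> unfolding fprod_def by blast
qed

lemma GSset_cdot: "GSset \<Gamma> (cdot S e) = fprod (GSset \<Gamma> S) (GS \<Gamma> e)"
proof -
  consider "e = Test BZero" | "e = Test BOne" | "e \<noteq> Test BZero" "e \<noteq> Test BOne"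
    by blast
  then show ?thesis
  proof cases
    case 1
    then show ?thesis by (simp add: cdot_def GSset_def fprod_def)
  next
    case 2
    have "guarded \<Gamma> (GSset \<Gamma> S)"
      using guarded_GS by (fastforce simp: guarded_def GSset_def)
    with 2 show ?thesis by (simp add: cdot_def fprod_GS_one del: GS.simps)
  next
    case 3
    then show ?thesis by (simp add: cdot_def GSset_def fprod_UN_left)
  qed
qed

lemma D_GS_Delta:
  assumes "finite \<Gamma>" and \<alpha>: "\<alpha> \<in> AtG \<Gamma>"
  shows "D \<alpha> p (GS \<Gamma> e) = GSset \<Gamma> (Delta \<Gamma> \<alpha> p e)"
proof (induction e)
  case (Act q)
  show ?case
    using \<alpha> bsat_post[OF assms(1)] by (auto simp: D_def GSset_def)
next
  case (Seq e1 e2)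
  then show ?case
    using Eps_iff_atom_in_GS[OF \<alpha>, of e1] by (simp add: D_fprod GSset_cdot GSset_Un)
next
  case (Star e)
  then show ?case by (simp add: D_star GSset_cdot)
qed (auto simp: D_def GSset_def)

theorem proposition7:
  fixes \<Gamma> :: "('p::finite, 't::finite) assm set"
    and e :: "('p, 't) kat" and \<alpha> :: "'t atom" and p :: 'p
  assumes "finite \<Gamma>"
  shows "D \<alpha> p (GS \<Gamma> e) = GSset \<Gamma> (Delta \<Gamma> \<alpha> p e)"
proof (cases "\<alpha> \<in> AtG \<Gamma>")
  case True
  then show ?thesis using assms by (rule D_GS_Delta[rotated])
next
  case False
  then show ?thesis by (simp add: D_GS_outside Delta_outside GSset_def)
qed

end
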